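(* There is an absolute constant $C>0$ such that the following holds. Let $\varepsilon\in(0,1)$ and let $f:\mathbb R\to\mathbb R$ be $1$-smooth with $f\ge0$, $f(0)=1$ and $f'(0)\le-\varepsilon$. Then ZerothOrder terminates and outputs an $\varepsilon$-stationary point of $f$ using at most $C(1+\log(1/\varepsilon))$ queries to the zeroth- and first-order oracle.
   Context: $f:\mathbb R\to\mathbb R$ is $1$-smooth if it is continuously differentiable and $f'$ is $1$-Lipschitz; $x$ is an $\varepsilon$-stationary point if $|f'(x)|<\varepsilon$. The oracle returns $(f(x),f'(x))$ on query $x$; values at already-queried points are reused. Subroutines (each "returns" its output to the caller, and a recursive call's output is returned unchanged): BinarySearch$(x_0,x_1)$: $m=(x_0+x_1)/2$; if $|f'(m)|<\varepsilon$ return $m$; if $f'(m)\le-\varepsilon$ return BinarySearch$(m,x_1)$; if $f'(m)>0$ return BinarySearch$(x_0,m)$. BinarySearchIII$(x_-,x_+)$: $m=(x_-+x_+)/2$; if $|f'(m)|<\varepsilon$ return $m$; else if $f'(m)>0$ return BinarySearch$(x_-,m)$; else if $f(m)\ge f(x_-)$ return BinarySearchIII$(x_-,m)$; else return BinarySearchIII$(m,x_+)$. BinarySearchII$(x_-,x_+)$: $m=(x_-+x_+)/2$; if $|f'(m)|<\varepsilon$ return $m$; else if $f'(m)>0$ return BinarySearch$(x_-,m)$; else if $f(m)\ge f(x_-)$ return BinarySearchIII$(x_-,m)$; else if $f(m)\le f(x_+)$ return BinarySearchIII$(m,x_+)$; else if $f(x_-)-f(m)\le\frac12(f(x_-)-f(x_+))$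 return BinarySearchII$(x_-,m)$; else return BinarySearchII$(m,x_+)$. DecreaseGap$(x_0)$: let $y=x_0+2/\varepsilon$; if $|f'(y)|<\varepsilon$ return ("stationary", $y$); else if $f'(y)>0$ return ("stationary", BinarySearch$(x_0,y)$); else if $f(y)\ge\frac34 f(x_0)$ return ("base", $x_0$); else return DecreaseGap$(y)$. ZerothOrder: run DecreaseGap$(0)$. If it returns ("stationary", $z$), output $z$. If it returns ("base", $x_-$), set $x_+=x_-+2/\varepsilon$; if $|f'(x_-)|<\varepsilon$ output $x_-$; else if $f(x_+)\le f(x_-)$ output BinarySearchII$(x_-,x_+)$; else output BinarySearchIII$(x_-,x_+)$. *)

theory Defs
  imports Complex_Main
begin

(* Executions of the subroutines are modelled with an explicit fuel parameter n
   (recursion depth budget). Result None = fuel exhausted (no termination within budget);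
   Some (z, qs) = output z, where qs lists the points at which the oracle
   (f(x), f'(x)) was consulted during the run. Queries at already-queried points
   are reused, so the number of oracle queries is card (set qs). *)

definition add_q :: "real list \<Rightarrow> (real \<times> real list) option \<Rightarrow> (real \<times> real list) option" where
  "add_q ps r = map_option (\<lambda>(z, qs). (z, ps @ qs)) r"

fun BinarySearch :: "(real \<Rightarrow> real) \<Rightarrow> real \<Rightarrow> nat \<Rightarrow> real \<Rightarrow> real \<Rightarrow> (real \<times> real list) option" where
  "BinarySearch f' \<epsilon> 0 x0 x1 = None"
| "BinarySearch f' \<epsilon> (Suc n) x0 x1 =
     (let m = (x0 + x1) / 2 in
      if \<bar>f' m\<bar> < \<epsilon> then Some (m, [m])
      else if f' m \<le> - \<epsilon> then add_q [m] (BinarySearch f' \<epsilon> n m x1)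
      else if f' m > 0 then add_q [m] (BinarySearch f' \<epsilon> n x0 m)
      else None)"

fun BinarySearchIII :: "(real \<Rightarrow> real) \<Rightarrow> (real \<Rightarrow> real) \<Rightarrow> real \<Rightarrow> nat \<Rightarrow> real \<Rightarrow> real \<Rightarrow> (real \<times> real list) option" where
  "BinarySearchIII f f' \<epsilon> 0 xm xp = None"
| "BinarySearchIII f f' \<epsilon> (Suc n) xm xp =
     (let m = (xm + xp) / 2 in
      if \<bar>f' m\<bar> < \<epsilon> then Some (m, [m])
      else if f' m > 0 then add_q [m] (BinarySearch f' \<epsilon> n xm m)
      else if f m \<ge> f xm then add_q [m, xm] (BinarySearchIII f f' \<epsilon> n xm m)
      else add_q [m, xm] (BinarySearchIII f f' \<epsilon> n m xp))"

fun BinarySearchII :: "(real \<Rightarrow> real) \<Rightarrow> (real \<Rightarrow> real) \<Rightarrow> real \<Rightarrow> nat \<Rightarrow> real \<Rightarrow> real \<Rightarrow> (real \<times> real list) option" where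
  "BinarySearchII f f' \<epsilon> 0 xm xp = None"
| "BinarySearchII f f' \<epsilon> (Suc n) xm xp =
     (let m = (xm + xp) / 2 in
      if \<bar>f' m\<bar> < \<epsilon> then Some (m, [m])
      else if f' m > 0 then add_q [m] (BinarySearch f' \<epsilon> n xm m)
      else if f m \<ge> f xm then add_q [m, xm] (BinarySearchIII f f' \<epsilon> n xm m)
      else if f m \<le> f xp then add_q [m, xm, xp] (BinarySearchIII f f' \<epsilon> n m xp)
      else if f xm - f m \<le> (f xm - f xp) / 2 then add_q [m, xm, xp] (BinarySearchII f f' \<epsilon> n xm m)
      else add_q [m, xm, xp] (BinarySearchII f f' \<epsilon> n m xp))"

datatype dg_result = Stationary real | Base real

fun DecreaseGap :: "(real \<Rightarrow> real) \<Rightarrow> (real \<Rightarrow> real) \<Rightarrow> real \<Rightarrow> nat \<Rightarrow> real \<Rightarrow> (dg_result \<times> real list) option" where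
  "DecreaseGap f f' \<epsilon> 0 x0 = None"
| "DecreaseGap f f' \<epsilon> (Suc n) x0 =
     (let y = x0 + 2 / \<epsilon> in
      if \<bar>f' y\<bar> < \<epsilon> then Some (Stationary y, [y])
      else if f' y > 0 then
        map_option (\<lambda>(z, qs). (Stationary z, y # qs)) (BinarySearch f' \<epsilon> n x0 y)
      else if f y \<ge> 3 / 4 * f x0 then Some (Base x0, [y, x0])
      else map_option (\<lambda>(r, qs). (r, [y, x0] @ qs)) (DecreaseGap f f' \<epsilon> n y))"

fun ZerothOrder :: "(real \<Rightarrow> real) \<Rightarrow> (real \<Rightarrow> real) \<Rightarrow> real \<Rightarrow> nat \<Rightarrow> (real \<times> real list) option" where
  "ZerothOrder f f' \<epsilon> n =
     (case DecreaseGap f f' \<epsilon> n 0 of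
        None \<Rightarrow> None
      | Some (Stationary z, qs) \<Rightarrow> Some (z, qs)
      | Some (Base xm, qs) \<Rightarrow>
          (let xp = xm + 2 / \<epsilon> in
           if \<bar>f' xm\<bar> < \<epsilon> then Some (xm, qs @ [xm])
           else if f xp \<le> f xm then add_q (qs @ [xm, xp]) (BinarySearchII f f' \<epsilon> n xm xp)
           else add_q (qs @ [xm, xp]) (BinarySearchIII f f' \<epsilon> n xm xp)))"

end

theory Submission
  imports Defs
begin

text \<open>
  The argument rests on two consequences of 1-smoothness. First, \<open>f \<ge> 0\<close> forces
  \<open>f x \<ge> f'(x)\<^sup>2 / 2 \<ge> \<epsilon>\<^sup>2 / 2\<close> wherever \<open>f' x \<le> -\<epsilon>\<close>, so the value of \<open>f\<close> can drop by the
  factor 3/4 at most \<open>O(log (1/\<epsilon>))\<close> times, which bounds the number of DecreaseGap steps.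
  Second, each bisection loop keeps an invariant on its bracket that becomes
  contradictory once the bracket is shorter than a fixed multiple of \<open>\<epsilon>\<close>:
  opposite-sign derivatives need width \<open>\<ge> 2\<epsilon>\<close> (Lipschitz derivative), and a descent
  direction at the left end forces \<open>f\<close> to decrease over short brackets. As the initial
  bracket has width \<open>2/\<epsilon>\<close>, every search ends after \<open>O(log (1/\<epsilon>))\<close> halvings.
\<close>

lemma quadratic_upper_bound_of_lipschitz_deriv:
  fixes f f' :: "real \<Rightarrow> real"
  assumes der: "\<And>x. (f has_real_derivative f' x) (at x)"
    and lip: "\<And>x y. \<bar>f' x - f' y\<bar> \<le> L * \<bar>x - y\<bar>"
    and "x \<le> y"
  shows "f y \<le> f x + f' x * (y - x) + L / 2 * (y - x)^2"
proof -
  define h where "h t = f t - f' x * (t - x) - L / 2 * (t - x)^2" for t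
  have "h y \<le> h x"
  proof (rule DERIV_nonpos_imp_nonincreasing[OF \<open>x \<le> y\<close>])
    fix t assume t: "x \<le> t" "t \<le> y"
    have "(h has_real_derivative f' t - f' x - L * (t - x)) (at t)"
      unfolding h_def[abs_def] by (auto intro!: derivative_eq_intros der)
    moreover have "f' t - f' x - L * (t - x) \<le> 0"
      using lip[of t x] t by (simp add: abs_if split: if_splits)
    ultimately show "\<exists>d. (h has_real_derivative d) (at t) \<and> d \<le> 0" by blast
  qed
  then show ?thesis unfolding h_def by simp
qed

lemma half_sq_deriv_le_of_nonneg:
  fixes f f' :: "real \<Rightarrow> real"
  assumes der: "\<And>x. (f has_real_derivative f' x) (at x)"
    and lip: "\<And>x y. \<bar>f' x - f' y\<bar> \<le> L * \<bar>x - y\<bar>"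
    and nonneg: "\<And>x. f x \<ge> 0" and "L > 0" and "f' x \<le> 0"
  shows "(f' x)^2 / (2 * L) \<le> f x"
proof -
  have "0 \<le> f (x - f' x / L)" by (rule nonneg)
  also have "\<dots> \<le> f x + f' x * (- f' x / L) + L / 2 * (- f' x / L)^2"
    using quadratic_upper_bound_of_lipschitz_deriv[OF der lip, of x "x - f' x / L"] assms
    by (simp add: divide_nonpos_pos)
  also have "\<dots> = f x - (f' x)^2 / (2 * L)"
    using \<open>L > 0\<close> by (simp add: field_simps power2_eq_square)
  finally show ?thesis by simp
qed

lemma midpoint_halves_width:
  fixes x0 x1 c :: real
  assumes "x0 < x1" "x1 - x0 < c * 2 ^ Suc k"
  shows "x0 < (x0 + x1) / 2" "(x0 + x1) / 2 < x1"
    "(x0 + x1) / 2 - x0 < c * 2 ^ k" "x1 - (x0 + x1) / 2 < c * 2 ^ k"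
  using assms by (auto simp: field_simps)

lemma exists_pow_four_thirds_gt_log_bounded:
  fixes \<epsilon> :: real
  assumes "0 < \<epsilon>" "\<epsilon> < 1"
  obtains k :: nat where "(4/3) ^ k > 2 / \<epsilon>^2" "real k \<le> 8 * ln (1 / \<epsilon>) + 8"
proof
  define L where "L = ln (1 / \<epsilon>)"
  define m where "m = nat \<lceil>2 * L + 1\<rceil>"
  have "L \<ge> 0" "exp L = 1 / \<epsilon>" using assms by (simp_all add: L_def)
  then have m_bounds: "2 * L + 1 \<le> real m" "real m \<le> 2 * L + 2"
    by (auto simp: m_def) linarith
  have "2 / \<epsilon>^2 = 2 * exp L * exp L"
    using \<open>exp L = 1 / \<epsilon>\<close> by (simp add: power2_eq_square)
  also have "\<dots> \<le> exp 1 * exp L * exp L"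
    using exp_ge_add_one_self[of 1] by simp
  also have "\<dots> = exp (2 * L + 1)"
    unfolding mult_2 exp_add by (simp only: mult_ac)
  also have "\<dots> \<le> exp (real m)" using m_bounds by simp
  also have "\<dots> = exp 1 ^ m" by (simp add: exp_of_nat_mult[symmetric])
  also have "\<dots> \<le> 3 ^ m" using exp_le by (intro power_mono) auto
  also have "\<dots> < (256 / 81) ^ m"
    using m_bounds \<open>L \<ge> 0\<close> by (intro power_strict_mono) auto
  also have "\<dots> = (4/3) ^ (4 * m)"
    by (simp only: power_mult) (simp add: eval_nat_numeral)
  finally show "(4/3) ^ (4 * m) > 2 / \<epsilon>^2" .
  show "real (4 * m) \<le> 8 * ln (1 / \<epsilon>) + 8" using m_bounds by (simp add: L_def)
qed

lemma inverse_lt_of_pow_four_thirds_gt: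
  fixes \<epsilon> :: real
  assumes "0 < \<epsilon>" "2 / \<epsilon>^2 < (4/3) ^ k"
  shows "2 / \<epsilon> < 3/2 * \<epsilon> * 2 ^ k" "2 / \<epsilon> < 2 * \<epsilon> * 2 ^ k"
proof -
  have "2 / \<epsilon>^2 < 2 ^ k" using assms(2) power_mono[of "4/3::real" 2 k] by linarith
  then have "2 / \<epsilon> < \<epsilon> * 2 ^ k" using assms(1) by (simp add: field_simps power2_eq_square)
  moreover have "0 < \<epsilon> * 2 ^ k" using assms(1) by simp
  ultimately show "2 / \<epsilon> < 3/2 * \<epsilon> * 2 ^ k" "2 / \<epsilon> < 2 * \<epsilon> * 2 ^ k" by linarith+
qed

locale smooth_nonneg_objective =
  fixes f f' :: "real \<Rightarrow> real" and \<epsilon> :: real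
  assumes eps_pos: "0 < \<epsilon>" and eps_lt_1: "\<epsilon> < 1"
    and deriv: "\<And>x. (f has_real_derivative f' x) (at x)"
    and deriv_lipschitz: "\<And>x y. \<bar>f' x - f' y\<bar> \<le> \<bar>x - y\<bar>"
    and nonneg: "\<And>x. f x \<ge> 0"
begin

lemma value_le_along_descent:
  assumes "x0 \<le> x1" "f' x0 \<le> - \<epsilon>"
  shows "f x1 \<le> f x0 - (x1 - x0) * (\<epsilon> - (x1 - x0) / 2)"
proof -
  have "f x1 \<le> f x0 + f' x0 * (x1 - x0) + 1 / 2 * (x1 - x0)^2"
    using quadratic_upper_bound_of_lipschitz_deriv[where L = 1, OF deriv _ assms(1)]
      deriv_lipschitz by simp
  moreover have "f' x0 * (x1 - x0) \<le> - \<epsilon> * (x1 - x0)"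
    using assms by (intro mult_right_mono) auto
  moreover have "(x1 - x0) * (\<epsilon> - (x1 - x0) / 2) = \<epsilon> * (x1 - x0) - 1 / 2 * (x1 - x0)^2"
    by (simp add: power2_eq_square field_simps)
  ultimately show ?thesis by linarith
qed

lemma value_ge_at_descent:
  assumes "f' x \<le> - \<epsilon>"
  shows "\<epsilon>^2 / 2 \<le> f x"
proof -
  have "\<epsilon>^2 \<le> (f' x)^2"
    using assms eps_pos by (subst abs_le_square_iff[symmetric]) auto
  moreover have "(f' x)^2 / 2 \<le> f x"
    using half_sq_deriv_le_of_nonneg[OF deriv _ nonneg, of 1] deriv_lipschitz assms eps_pos by simp
  ultimately show ?thesis by simp
qed

definition finds_stationary :: "(real \<times> real list) option \<Rightarrow> nat \<Rightarrow> bool" where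
  "finds_stationary r q \<longleftrightarrow> (\<exists>z qs. r = Some (z, qs) \<and> \<bar>f' z\<bar> < \<epsilon> \<and> length qs \<le> q)"

lemma finds_stationary_Some:
  "\<bar>f' z\<bar> < \<epsilon> \<Longrightarrow> length qs \<le> q \<Longrightarrow> finds_stationary (Some (z, qs)) q"
  by (simp add: finds_stationary_def)

lemma finds_stationary_add_q:
  "finds_stationary r q \<Longrightarrow> length ps + q \<le> q' \<Longrightarrow> finds_stationary (add_q ps r) q'"
  by (auto simp: finds_stationary_def add_q_def)

lemma BinarySearch_finds_stationary:
  "x0 < x1 \<Longrightarrow> f' x0 \<le> - \<epsilon> \<Longrightarrow> \<epsilon> \<le> f' x1 \<Longrightarrow> x1 - x0 < 2 * \<epsilon> * 2 ^ k \<Longrightarrow> k < n \<Longrightarrow>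
   finds_stationary (BinarySearch f' \<epsilon> n x0 x1) (k + 1)"
proof (induction k arbitrary: x0 x1 n)
  case 0
  have "f' x1 - f' x0 \<le> x1 - x0" using deriv_lipschitz[of x1 x0] 0 by simp
  then show ?case using 0 by simp
next
  case (Suc k)
  then obtain n' where n: "n = Suc n'" and "k < n'" by (cases n) auto
  define m where "m = (x0 + x1) / 2"
  note halves = midpoint_halves_width[OF Suc.prems(1,4), folded m_def]
  consider "\<bar>f' m\<bar> < \<epsilon>" | "f' m \<le> - \<epsilon>" | "\<epsilon> \<le> f' m" by linarith
  then show ?case
  proof cases
    case 1
    then show ?thesis by (simp add: n m_def[symmetric] finds_stationary_Some)
  next
    case 2
    with Suc.IH[OF halves(2) 2 Suc.prems(3) halves(4) \<open>k < n'\<close>] eps_pos show ?thesis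
      by (simp add: n m_def[symmetric] finds_stationary_add_q)
  next
    case 3
    with Suc.IH[OF halves(1) Suc.prems(2) 3 halves(3) \<open>k < n'\<close>] eps_pos show ?thesis
      by (simp add: n m_def[symmetric] finds_stationary_add_q)
  qed
qed

lemma BinarySearchIII_finds_stationary:
  "x0 < x1 \<Longrightarrow> f' x0 \<le> - \<epsilon> \<Longrightarrow> f x0 \<le> f x1 \<Longrightarrow> x1 - x0 < 2 * \<epsilon> * 2 ^ k \<Longrightarrow> k < n \<Longrightarrow>
   finds_stationary (BinarySearchIII f f' \<epsilon> n x0 x1) (2 * k + 2)"
proof (induction k arbitrary: x0 x1 n)
  case 0
  have "0 < (x1 - x0) * (\<epsilon> - (x1 - x0) / 2)" using 0 by (intro mult_pos_pos) auto
  then have "f x1 < f x0" using value_le_along_descent[of x0 x1] 0 by linarith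
  then show ?case using 0 by simp
next
  case (Suc k)
  then obtain n' where n: "n = Suc n'" and "k < n'" by (cases n) auto
  define m where "m = (x0 + x1) / 2"
  note halves = midpoint_halves_width[OF Suc.prems(1,4), folded m_def]
  consider "\<bar>f' m\<bar> < \<epsilon>" | "\<epsilon> \<le> f' m" | "f' m \<le> - \<epsilon>" "f x0 \<le> f m"
    | "f' m \<le> - \<epsilon>" "f m < f x0" by linarith
  then show ?case
  proof cases
    case 1
    then show ?thesis by (simp add: n m_def[symmetric] finds_stationary_Some)
  next
    case 2
    with BinarySearch_finds_stationary[OF halves(1) Suc.prems(2) 2 halves(3) \<open>k < n'\<close>] eps_pos
    show ?thesis by (simp add: n m_def[symmetric] finds_stationary_add_q)
  next
    case 3
    with Suc.IH[OF halves(1) Suc.prems(2) 3(2) halves(3) \<open>k < n'\<close>] eps_pos show ?thesis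
      by (simp add: n m_def[symmetric] finds_stationary_add_q)
  next
    case 4
    with Suc.IH[OF halves(2) 4(1) _ halves(4) \<open>k < n'\<close>] Suc.prems(3) eps_pos show ?thesis
      by (simp add: n m_def[symmetric] finds_stationary_add_q)
  qed
qed

text \<open>
  BinarySearchII keeps a bracket whose average slope \<open>(f x1 - f x0) / (x1 - x0)\<close> stays
  above \<open>-\<epsilon>/8\<close>: halving the drop together with the width preserves this, and over
  a bracket shorter than \<open>3\<epsilon>/2\<close> the descent at \<open>x0\<close> forces a steeper decrease.
\<close>
lemma BinarySearchII_finds_stationary:
  "x0 < x1 \<Longrightarrow> f' x0 \<le> - \<epsilon> \<Longrightarrow> f x0 - f x1 \<le> \<epsilon> / 8 * (x1 - x0) \<Longrightarrow>
   x1 - x0 < 3/2 * \<epsilon> * 2 ^ k \<Longrightarrow> k < n \<Longrightarrow>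
   finds_stationary (BinarySearchII f f' \<epsilon> n x0 x1) (3 * k + 3)"
proof (induction k arbitrary: x0 x1 n)
  case 0
  have "0 < (x1 - x0) * (7/8 * \<epsilon> - (x1 - x0) / 2)" using 0 by (intro mult_pos_pos) auto
  moreover have "(x1 - x0) * (7/8 * \<epsilon> - (x1 - x0) / 2)
      = (x1 - x0) * (\<epsilon> - (x1 - x0) / 2) - \<epsilon> / 8 * (x1 - x0)"
    by (simp add: field_simps)
  ultimately have "\<epsilon> / 8 * (x1 - x0) < f x0 - f x1"
    using value_le_along_descent[of x0 x1] 0 by linarith
  then show ?case using 0 by simp
next
  case (Suc k)
  then obtain n' where n: "n = Suc n'" and "k < n'" by (cases n) auto
  define m where "m = (x0 + x1) / 2"
  note halves = midpoint_halves_width[OF Suc.prems(1,4), folded m_def]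
  have "0 < \<epsilon> * 2 ^ k" using eps_pos by simp
  with halves(3,4) have wide: "m - x0 < 2 * \<epsilon> * 2 ^ k" "x1 - m < 2 * \<epsilon> * 2 ^ k"
    by linarith+
  consider "\<bar>f' m\<bar> < \<epsilon>" | "\<epsilon> \<le> f' m" | "f' m \<le> - \<epsilon>" "f x0 \<le> f m"
    | "f' m \<le> - \<epsilon>" "f m < f x0" "f m \<le> f x1"
    | "f' m \<le> - \<epsilon>" "f m < f x0" "f x1 < f m" "f x0 - f m \<le> (f x0 - f x1) / 2"
    | "f' m \<le> - \<epsilon>" "f m < f x0" "f x1 < f m" "(f x0 - f x1) / 2 < f x0 - f m"
    by linarith
  then show ?case
  proof cases
    case 1
    then show ?thesis by (simp add: n m_def[symmetric] finds_stationary_Some)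
  next
    case 2
    with BinarySearch_finds_stationary[OF halves(1) Suc.prems(2) 2 wide(1) \<open>k < n'\<close>] eps_pos
    show ?thesis by (simp add: n m_def[symmetric] finds_stationary_add_q)
  next
    case 3
    with BinarySearchIII_finds_stationary[OF halves(1) Suc.prems(2) 3(2) wide(1) \<open>k < n'\<close>] eps_pos
    show ?thesis by (simp add: n m_def[symmetric] finds_stationary_add_q)
  next
    case 4
    with BinarySearchIII_finds_stationary[OF halves(2) 4(1) 4(3) wide(2) \<open>k < n'\<close>] eps_pos
    show ?thesis by (simp add: n m_def[symmetric] finds_stationary_add_q)
  next
    case 5
    have "f x0 - f m \<le> \<epsilon> / 8 * (m - x0)" using 5 Suc.prems(3) by (simp add: m_def field_simps)
    with Suc.IH[OF halves(1) Suc.prems(2) _ halves(3) \<open>k < n'\<close>] 5 eps_pos show ?thesis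
      by (simp add: n m_def[symmetric] finds_stationary_add_q)
  next
    case 6
    have "f m - f x1 \<le> \<epsilon> / 8 * (x1 - m)" using 6 Suc.prems(3) by (simp add: m_def field_simps)
    with Suc.IH[OF halves(2) 6(1) _ halves(4) \<open>k < n'\<close>] 6 eps_pos show ?thesis
      by (simp add: n m_def[symmetric] finds_stationary_add_q)
  qed
qed

definition gap_result_ok :: "real \<Rightarrow> dg_result \<Rightarrow> bool" where
  "gap_result_ok x0 r \<longleftrightarrow> (case r of
      Stationary z \<Rightarrow> \<bar>f' z\<bar> < \<epsilon>
    | Base xm \<Rightarrow> f' xm \<le> - \<epsilon> \<and> f xm \<le> f x0 \<and> 3/4 * f xm \<le> f (xm + 2 / \<epsilon>))"

text \<open>
  The exponent \<open>j\<close> counts the remaining factor-3/4 decreases: below \<open>\<epsilon>\<^sup>2/2\<close> no point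
  with \<open>f' \<le> -\<epsilon>\<close> exists. The hypothesis on \<open>k\<close> makes the bracket \<open>[x0, x0 + 2/\<epsilon>]\<close> short
  enough for BinarySearch.
\<close>
lemma DecreaseGap_terminates:
  assumes k: "2 / \<epsilon>^2 < (4/3) ^ k"
  shows "f' x0 \<le> - \<epsilon> \<Longrightarrow> f x0 < \<epsilon>^2 / 2 * (4/3) ^ j \<Longrightarrow> j + k < n \<Longrightarrow>
    \<exists>r qs. DecreaseGap f f' \<epsilon> n x0 = Some (r, qs) \<and> gap_result_ok x0 r \<and> length qs \<le> 2 * j + k + 2"
proof (induction j arbitrary: x0 n)
  case 0
  then show ?case using value_ge_at_descent[of x0] by simp
next
  case (Suc j)
  then obtain n' where n: "n = Suc n'" and "j + k < n'" by (cases n) auto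
  define y where "y = x0 + 2 / \<epsilon>"
  have short: "y - x0 < 2 * \<epsilon> * 2 ^ k" "x0 < y"
    using inverse_lt_of_pow_four_thirds_gt(2)[OF eps_pos k] eps_pos by (simp_all add: y_def)
  consider "\<bar>f' y\<bar> < \<epsilon>" | "\<epsilon> \<le> f' y" | "f' y \<le> - \<epsilon>" "3/4 * f x0 \<le> f y"
    | "f' y \<le> - \<epsilon>" "f y < 3/4 * f x0" by linarith
  then show ?case
  proof cases
    case 1
    then show ?thesis by (simp add: n y_def[symmetric] gap_result_ok_def)
  next
    case 2
    from BinarySearch_finds_stationary[OF short(2) Suc.prems(1) 2 short(1), of n'] \<open>j + k < n'\<close>
    obtain z qs where "BinarySearch f' \<epsilon> n' x0 y = Some (z, qs)" "\<bar>f' z\<bar> < \<epsilon>" "length qs \<le> k + 1"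
      by (auto simp: finds_stationary_def)
    with 2 eps_pos show ?thesis by (simp add: n y_def[symmetric] gap_result_ok_def)
  next
    case 3
    with Suc.prems eps_pos show ?thesis by (simp add: n y_def[symmetric] gap_result_ok_def)
  next
    case 4
    have "f y < \<epsilon>^2 / 2 * (4/3) ^ j" using 4 Suc.prems(2) by simp
    from Suc.IH[OF 4(1) this \<open>j + k < n'\<close>] obtain r qs where
      "DecreaseGap f f' \<epsilon> n' y = Some (r, qs)" "gap_result_ok y r" "length qs \<le> 2 * j + k + 2"
      by blast
    moreover have "f y \<le> f x0" using 4 nonneg[of x0] by linarith
    ultimately show ?thesis using 4 eps_pos
      by (cases r) (auto simp: n y_def[symmetric] gap_result_ok_def)
  qed
qed

lemma ZerothOrder_finds_stationary:
  assumes "f 0 = 1" "f' 0 \<le> - \<epsilon>" and k: "2 / \<epsilon>^2 < (4/3) ^ k" and "2 * k < n"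
  shows "finds_stationary (ZerothOrder f f' \<epsilon> n) (6 * k + 7)"
proof -
  have "1 < \<epsilon>^2 / 2 * (4/3) ^ k" using k eps_pos by (simp add: field_simps)
  with DecreaseGap_terminates[OF k \<open>f' 0 \<le> - \<epsilon>\<close>, of k n] \<open>f 0 = 1\<close> \<open>2 * k < n\<close>
  obtain r qs where r: "DecreaseGap f f' \<epsilon> n 0 = Some (r, qs)"
    and ok: "gap_result_ok 0 r" and len: "length qs \<le> 3 * k + 2"
    by auto
  show ?thesis
  proof (cases r)
    case (Stationary z)
    with r ok len show ?thesis by (simp add: gap_result_ok_def finds_stationary_Some)
  next
    case (Base xm)
    define xp where "xp = xm + 2 / \<epsilon>"
    have xm: "f' xm \<le> - \<epsilon>" "f xm \<le> 1" "3/4 * f xm \<le> f xp"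
      using ok \<open>f 0 = 1\<close> by (auto simp: Base gap_result_ok_def xp_def)
    have "xm < xp" using eps_pos by (simp add: xp_def)
    have short: "xp - xm < 3/2 * \<epsilon> * 2 ^ k" "xp - xm < 2 * \<epsilon> * 2 ^ k"
      using inverse_lt_of_pow_four_thirds_gt[OF eps_pos k] by (simp_all add: xp_def)
    have "k < n" using \<open>2 * k < n\<close> by simp
    show ?thesis
    proof (cases "f xp \<le> f xm")
      case True
      \<comment> \<open>\<open>f xm - f xp \<le> f xm / 4 \<le> 1/4\<close>, and the width \<open>2/\<epsilon>\<close> turns this into the slope bound\<close>
      have "f xm - f xp \<le> \<epsilon> / 8 * (xp - xm)" using xm eps_pos by (simp add: xp_def)
      from BinarySearchII_finds_stationary[OF \<open>xm < xp\<close> xm(1) this short(1) \<open>k < n\<close>]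
      show ?thesis using r len True xm(1) eps_pos
        by (simp add: Base xp_def[symmetric] finds_stationary_add_q)
    next
      case False
      from BinarySearchIII_finds_stationary[OF \<open>xm < xp\<close> xm(1) _ short(2) \<open>k < n\<close>]
      show ?thesis using r len False xm(1) eps_pos
        by (simp add: Base xp_def[symmetric] finds_stationary_add_q)
    qed
  qed
qed

end

theorem theorem2p5:
  "\<exists>C > 0. \<forall>(\<epsilon>::real) (f::real \<Rightarrow> real) (f'::real \<Rightarrow> real).
      0 < \<epsilon> \<and> \<epsilon> < 1 \<and>
      (\<forall>x. (f has_real_derivative f' x) (at x)) \<and>
      (\<forall>x y. \<bar>f' x - f' y\<bar> \<le> \<bar>x - y\<bar>) \<and>
      (\<forall>x. f x \<ge> 0) \<and> f 0 = 1 \<and> f' 0 \<le> - \<epsilon>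
    \<longrightarrow> (\<exists>n z qs. ZerothOrder f f' \<epsilon> n = Some (z, qs) \<and> \<bar>f' z\<bar> < \<epsilon> \<and>
                   real (card (set qs)) \<le> C * (1 + ln (1 / \<epsilon>)))"
proof (intro exI[of _ "55::real"] conjI allI impI)
  fix \<epsilon> :: real and f f' :: "real \<Rightarrow> real"
  assume h: "0 < \<epsilon> \<and> \<epsilon> < 1 \<and>
      (\<forall>x. (f has_real_derivative f' x) (at x)) \<and>
      (\<forall>x y. \<bar>f' x - f' y\<bar> \<le> \<bar>x - y\<bar>) \<and>
      (\<forall>x. f x \<ge> 0) \<and> f 0 = 1 \<and> f' 0 \<le> - \<epsilon>"
  interpret smooth_nonneg_objective f f' \<epsilon> using h by unfold_locales auto
  obtain k where k: "2 / \<epsilon>^2 < (4/3) ^ k" and k_le: "real k \<le> 8 * ln (1 / \<epsilon>) + 8"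
    using exists_pow_four_thirds_gt_log_bounded[OF eps_pos eps_lt_1] by blast
  have "finds_stationary (ZerothOrder f f' \<epsilon> (2 * k + 1)) (6 * k + 7)"
    using h by (intro ZerothOrder_finds_stationary[OF _ _ k]) auto
  then obtain z qs where
    run: "ZerothOrder f f' \<epsilon> (2 * k + 1) = Some (z, qs)" "\<bar>f' z\<bar> < \<epsilon>" "length qs \<le> 6 * k + 7"
    unfolding finds_stationary_def by blast
  have "real (card (set qs)) \<le> 6 * real k + 7"
    using card_length[of qs] run(3) by linarith
  also have "\<dots> \<le> 55 * (1 + ln (1 / \<epsilon>))"
  proof -
    have "0 \<le> ln (1 / \<epsilon>)" using eps_pos eps_lt_1 by simp
    with k_le show ?thesis by (simp add: algebra_simps)
  qed
  finally show "\<exists>n z qs. ZerothOrder f f' \<epsilon> n = Some (z, qs) \<and> \<bar>f' z\<bar> < \<epsilon> \<and>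
                   real (card (set qs)) \<le> 55 * (1 + ln (1 / \<epsilon>))"
    using run by blast
qed simp

end
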